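(* Consider an execution of the OffsetGCS algorithm with parameters $\rho,\mu,\kappa,\delta$ on the graph $G$ (as in the context). Suppose that for all nodes $v$, all neighbors $w$ of $v$ and all times $t$, $\left|\widehat O_{v,w}(t)-(L_w(t)-L_v(t))\right|\le\delta$. If $\kappa>2\delta$ and $\mu>\rho$, then the logical clocks form a GCS execution with parameters $\rho,\mu,\kappa$, i.e., they satisfy (I1)–(I4) below.
   Context: Let $G=(V,E)$ be a finite, connected, undirected graph with at least two nodes; $N_v$ is the set of neighbors of $v$, $\mathbb{N}=\{0,1,2,\dots\}$. Times range over $[0,\infty)$. Fix reals $\rho>0$, $\mu$, $\kappa>0$, $\delta\ge0$. Each node $v$ has a hardware clock $H_v:[0,\infty)\to\mathbb{R}$ with $t'-t\le H_v(t')-H_v(t)\le(1+\rho)(t'-t)$ for $0\le t\le t'$, and a logical clock $L_v:[0,\infty)\to\mathbb{R}$. For each node $v$, neighbor $w$ and time $t$, $v$ has an offset estimate $\widehat O_{v,w}(t)\in\mathbb{R}$; let $\widehat O_{\min,v}(t)=\min_{w\in N_v}\widehat O_{v,w}(t)$ and $\widehat O_{\max,v}(t)=\max_{w\in N_v}\widehat O_{v,w}(t)$. Node $v$ satisfies the fast trigger at $t$ if there is $s\in\mathbb{N}$ with $\widehat O_{\max,v}(t)\ge(2s+1)\kappa-\delta$ and $\widehat O_{\min,v}(t)\ge-(2s+1)\kappa-\delta$. An execution of OffsetGCS (each node runs at $(1+\mu)$ times its hardware rate while the fast trigger holds, and at its hardware rate otherwise) means: $L_v(0)=H_v(0)$;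 for all $v$ and $0\le t\le t'$, $H_v(t')-H_v(t)\le L_v(t')-L_v(t)\le(1+\mu)(H_v(t')-H_v(t))$; if $v$ satisfies the fast trigger at every time of $[t,t']$ then $L_v(t')-L_v(t)=(1+\mu)(H_v(t')-H_v(t))$; if $v$ satisfies the fast trigger at no time of $[t,t']$ then $L_v(t')-L_v(t)=H_v(t')-H_v(t)$. Node $v$ satisfies the fast condition at $t$ if there is $s\in\mathbb{N}$ with (FC1) some neighbor $x$ has $L_x(t)-L_v(t)\ge(2s+1)\kappa$ and (FC2) every neighbor $y$ has $L_v(t)-L_y(t)\le(2s+1)\kappa$; it satisfies the slow condition at $t$ if there is $s\in\mathbb{N}$ with (SC1) some neighbor $x$ has $L_v(t)-L_x(t)\ge2s\kappa$ and (SC2) every neighbor $y$ has $L_y(t)-L_v(t)\le2s\kappa$. A GCS execution with parameters $\rho,\mu,\kappa$ means: (I1) $\mu>\rho$; (I2) for all $v$, $0\le t\le t'$: $H_v(t')-H_v(t)\le L_v(t')-L_v(t)\le(1+\mu)(H_v(t')-H_v(t))$; (I3) if $v$ satisfies the fast condition throughout $[t,t']$ then $L_v(t')-L_v(t)=(1+\mu)(H_v(t')-H_v(t))$; (I4) if $v$ satisfies the slow condition throughout $[t,t']$ then $L_v(t')-L_v(t)=H_v(t')-H_v(t)$. *)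

theory Defs
  imports Complex_Main
begin

definition graph_ok :: "'v set \<Rightarrow> ('v \<times> 'v) set \<Rightarrow> bool" where
  "graph_ok V E \<longleftrightarrow> finite V \<and> card V \<ge> 2 \<and> E \<subseteq> V \<times> V \<and> sym E
     \<and> (\<forall>v. (v, v) \<notin> E) \<and> (\<forall>u\<in>V. \<forall>w\<in>V. (u, w) \<in> E\<^sup>*)"

definition nbrs :: "('v \<times> 'v) set \<Rightarrow> 'v \<Rightarrow> 'v set" where
  "nbrs E v = {w. (v, w) \<in> E}"

definition hw_clocks :: "'v set \<Rightarrow> real \<Rightarrow> ('v \<Rightarrow> real \<Rightarrow> real) \<Rightarrow> bool" where
  "hw_clocks V \<rho> H \<longleftrightarrow> (\<forall>v\<in>V. \<forall>t t'. 0 \<le> t \<and> t \<le> t' \<longrightarrow>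
      t' - t \<le> H v t' - H v t \<and> H v t' - H v t \<le> (1 + \<rho>) * (t' - t))"

definition Omin :: "('v \<times> 'v) set \<Rightarrow> ('v \<Rightarrow> 'v \<Rightarrow> real \<Rightarrow> real) \<Rightarrow> 'v \<Rightarrow> real \<Rightarrow> real" where
  "Omin E Oh v t = Min ((\<lambda>w. Oh v w t) ` nbrs E v)"

definition Omax :: "('v \<times> 'v) set \<Rightarrow> ('v \<Rightarrow> 'v \<Rightarrow> real \<Rightarrow> real) \<Rightarrow> 'v \<Rightarrow> real \<Rightarrow> real" where
  "Omax E Oh v t = Max ((\<lambda>w. Oh v w t) ` nbrs E v)"

definition fast_trigger :: "('v \<times> 'v) set \<Rightarrow> real \<Rightarrow> real \<Rightarrow> ('v \<Rightarrow> 'v \<Rightarrow> real \<Rightarrow> real) \<Rightarrow> 'v \<Rightarrow> real \<Rightarrow> bool" where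
  "fast_trigger E \<kappa> \<delta> Oh v t \<longleftrightarrow> (\<exists>s::nat.
      Omax E Oh v t \<ge> (2 * real s + 1) * \<kappa> - \<delta> \<and> Omin E Oh v t \<ge> - (2 * real s + 1) * \<kappa> - \<delta>)"

definition rate_bounds :: "'v set \<Rightarrow> real \<Rightarrow> ('v \<Rightarrow> real \<Rightarrow> real) \<Rightarrow> ('v \<Rightarrow> real \<Rightarrow> real) \<Rightarrow> bool" where
  "rate_bounds V \<mu> H L \<longleftrightarrow> (\<forall>v\<in>V. \<forall>t t'. 0 \<le> t \<and> t \<le> t' \<longrightarrow>
      H v t' - H v t \<le> L v t' - L v t \<and> L v t' - L v t \<le> (1 + \<mu>) * (H v t' - H v t))"

definition offset_gcs_exec ::
  "'v set \<Rightarrow> ('v \<times> 'v) set \<Rightarrow> real \<Rightarrow> real \<Rightarrow> real \<Rightarrow>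
   ('v \<Rightarrow> real \<Rightarrow> real) \<Rightarrow> ('v \<Rightarrow> real \<Rightarrow> real) \<Rightarrow> ('v \<Rightarrow> 'v \<Rightarrow> real \<Rightarrow> real) \<Rightarrow> bool" where
  "offset_gcs_exec V E \<mu> \<kappa> \<delta> H L Oh \<longleftrightarrow>
     (\<forall>v\<in>V. L v 0 = H v 0) \<and> rate_bounds V \<mu> H L \<and>
     (\<forall>v\<in>V. \<forall>t t'. 0 \<le> t \<and> t \<le> t' \<longrightarrow>
        (\<forall>\<tau>\<in>{t..t'}. fast_trigger E \<kappa> \<delta> Oh v \<tau>) \<longrightarrow>
          L v t' - L v t = (1 + \<mu>) * (H v t' - H v t)) \<and>
     (\<forall>v\<in>V. \<forall>t t'. 0 \<le> t \<and> t \<le> t' \<longrightarrow>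
        (\<forall>\<tau>\<in>{t..t'}. \<not> fast_trigger E \<kappa> \<delta> Oh v \<tau>) \<longrightarrow>
          L v t' - L v t = H v t' - H v t)"

definition fast_cond :: "('v \<times> 'v) set \<Rightarrow> real \<Rightarrow> ('v \<Rightarrow> real \<Rightarrow> real) \<Rightarrow> 'v \<Rightarrow> real \<Rightarrow> bool" where
  "fast_cond E \<kappa> L v t \<longleftrightarrow> (\<exists>s::nat.
      (\<exists>x\<in>nbrs E v. L x t - L v t \<ge> (2 * real s + 1) * \<kappa>) \<and>
      (\<forall>y\<in>nbrs E v. L v t - L y t \<le> (2 * real s + 1) * \<kappa>))"

definition slow_cond :: "('v \<times> 'v) set \<Rightarrow> real \<Rightarrow> ('v \<Rightarrow> real \<Rightarrow> real) \<Rightarrow> 'v \<Rightarrow> real \<Rightarrow> bool" where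
  "slow_cond E \<kappa> L v t \<longleftrightarrow> (\<exists>s::nat.
      (\<exists>x\<in>nbrs E v. L v t - L x t \<ge> 2 * real s * \<kappa>) \<and>
      (\<forall>y\<in>nbrs E v. L y t - L v t \<le> 2 * real s * \<kappa>))"

definition gcs_exec ::
  "'v set \<Rightarrow> ('v \<times> 'v) set \<Rightarrow> real \<Rightarrow> real \<Rightarrow> real \<Rightarrow>
   ('v \<Rightarrow> real \<Rightarrow> real) \<Rightarrow> ('v \<Rightarrow> real \<Rightarrow> real) \<Rightarrow> bool" where
  "gcs_exec V E \<rho> \<mu> \<kappa> H L \<longleftrightarrow>
     \<mu> > \<rho> \<and> rate_bounds V \<mu> H L \<and>
     (\<forall>v\<in>V. \<forall>t t'. 0 \<le> t \<and> t \<le> t' \<longrightarrow>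
        (\<forall>\<tau>\<in>{t..t'}. fast_cond E \<kappa> L v \<tau>) \<longrightarrow>
          L v t' - L v t = (1 + \<mu>) * (H v t' - H v t)) \<and>
     (\<forall>v\<in>V. \<forall>t t'. 0 \<le> t \<and> t \<le> t' \<longrightarrow>
        (\<forall>\<tau>\<in>{t..t'}. slow_cond E \<kappa> L v \<tau>) \<longrightarrow>
          L v t' - L v t = H v t' - H v t)"

end

theory Submission
  imports Defs
begin

text \<open>An estimate within \<open>\<delta>\<close> of the true offset turns the fast condition at level \<open>s\<close>
  into the fast trigger at the same level. The slow condition at level \<open>s\<close> excludes the
  trigger at every level \<open>s'\<close>: the maximal estimate forces \<open>(2s'+1)\<kappa> - \<delta> \<le> 2s\<kappa> + \<delta>\<close>, the
  minimal one \<open>-(2s'+1)\<kappa> - \<delta> \<le> -2s\<kappa> + \<delta>\<close>, and with \<open>\<kappa> > 2\<delta>\<close> these give \<open>s' < s < s' + 1\<close>.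
  Hence OffsetGCS runs fast (slow) throughout any interval where the fast (slow) condition
  holds, which are invariants (I3) and (I4); (I1) and (I2) are inherited directly.\<close>

lemma finite_nbrs: "graph_ok V E \<Longrightarrow> finite (nbrs E v)"
  unfolding graph_ok_def nbrs_def by (auto intro: finite_subset)

lemma Omax_ge_iff:
  "finite (nbrs E v) \<Longrightarrow> nbrs E v \<noteq> {} \<Longrightarrow>
    c \<le> Omax E Oh v t \<longleftrightarrow> (\<exists>w\<in>nbrs E v. c \<le> Oh v w t)"
  by (simp add: Omax_def Max_ge_iff)

lemma Omax_le_iff:
  "finite (nbrs E v) \<Longrightarrow> nbrs E v \<noteq> {} \<Longrightarrow>
    Omax E Oh v t \<le> c \<longleftrightarrow> (\<forall>w\<in>nbrs E v. Oh v w t \<le> c)"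
  by (simp add: Omax_def)

lemma Omin_ge_iff:
  "finite (nbrs E v) \<Longrightarrow> nbrs E v \<noteq> {} \<Longrightarrow>
    c \<le> Omin E Oh v t \<longleftrightarrow> (\<forall>w\<in>nbrs E v. c \<le> Oh v w t)"
  by (simp add: Omin_def)

lemma Omin_le_iff:
  "finite (nbrs E v) \<Longrightarrow> nbrs E v \<noteq> {} \<Longrightarrow>
    Omin E Oh v t \<le> c \<longleftrightarrow> (\<exists>w\<in>nbrs E v. Oh v w t \<le> c)"
  by (simp add: Omin_def Min_le_iff)

lemma fast_cond_imp_fast_trigger:
  assumes fin: "finite (nbrs E v)"
    and acc: "\<forall>w\<in>nbrs E v. \<bar>Oh v w t - (L w t - L v t)\<bar> \<le> \<delta>"
    and "fast_cond E \<kappa> L v t"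
  shows "fast_trigger E \<kappa> \<delta> Oh v t"
proof -
  from \<open>fast_cond E \<kappa> L v t\<close> obtain s :: nat and x
    where x: "x \<in> nbrs E v" "L x t - L v t \<ge> (2 * real s + 1) * \<kappa>"
      and all_y: "\<forall>y\<in>nbrs E v. L v t - L y t \<le> (2 * real s + 1) * \<kappa>"
    unfolding fast_cond_def by blast
  have nonempty: "nbrs E v \<noteq> {}" using x(1) by blast
  have "(2 * real s + 1) * \<kappa> - \<delta> \<le> Omax E Oh v t"
    unfolding Omax_ge_iff[OF fin nonempty]
    using x(2) acc[rule_format, OF x(1)] by (intro bexI[OF _ x(1)]) linarith
  moreover have "- (2 * real s + 1) * \<kappa> - \<delta> \<le> Omin E Oh v t"
    unfolding Omin_ge_iff[OF fin nonempty]
  proof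
    fix y assume y: "y \<in> nbrs E v"
    show "- (2 * real s + 1) * \<kappa> - \<delta> \<le> Oh v y t"
      using all_y[rule_format, OF y] acc[rule_format, OF y] by linarith
  qed
  ultimately show ?thesis unfolding fast_trigger_def by blast
qed

lemma slow_cond_imp_not_fast_trigger:
  assumes fin: "finite (nbrs E v)"
    and acc: "\<forall>w\<in>nbrs E v. \<bar>Oh v w t - (L w t - L v t)\<bar> \<le> \<delta>"
    and "\<kappa> > 2 * \<delta>"
    and "slow_cond E \<kappa> L v t"
  shows "\<not> fast_trigger E \<kappa> \<delta> Oh v t"
proof
  assume "fast_trigger E \<kappa> \<delta> Oh v t"
  then obtain s' :: nat
    where trig_max: "(2 * real s' + 1) * \<kappa> - \<delta> \<le> Omax E Oh v t"
      and trig_min: "- (2 * real s' + 1) * \<kappa> - \<delta> \<le> Omin E Oh v t"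
    unfolding fast_trigger_def by blast
  from \<open>slow_cond E \<kappa> L v t\<close> obtain s :: nat and x
    where x: "x \<in> nbrs E v" "L v t - L x t \<ge> 2 * real s * \<kappa>"
      and all_y: "\<forall>y\<in>nbrs E v. L y t - L v t \<le> 2 * real s * \<kappa>"
    unfolding slow_cond_def by blast
  have nonempty: "nbrs E v \<noteq> {}" using x(1) by blast
  have "\<delta> \<ge> 0" using acc x(1) by force
  with \<open>\<kappa> > 2 * \<delta>\<close> have "\<kappa> > 0" by linarith
  have "Omax E Oh v t \<le> 2 * real s * \<kappa> + \<delta>"
    unfolding Omax_le_iff[OF fin nonempty]
    using all_y acc by (fastforce simp: abs_le_iff)
  with trig_max \<open>\<kappa> > 2 * \<delta>\<close> have "real s' * \<kappa> < real s * \<kappa>"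
    by (simp add: algebra_simps)
  then have "s' < s" using \<open>\<kappa> > 0\<close> by simp
  have "Omin E Oh v t \<le> - 2 * real s * \<kappa> + \<delta>"
    unfolding Omin_le_iff[OF fin nonempty]
    using x(2) acc[rule_format, OF x(1)] by (intro bexI[OF _ x(1)]) linarith
  with trig_min \<open>\<kappa> > 2 * \<delta>\<close> have "real s * \<kappa> < (real s' + 1) * \<kappa>"
    by (simp add: algebra_simps)
  then have "s < s' + 1" using \<open>\<kappa> > 0\<close> by simp
  with \<open>s' < s\<close> show False by simp
qed

theorem lemma2:
  fixes V :: "'v set" and E :: "('v \<times> 'v) set"
    and \<rho> \<mu> \<kappa> \<delta> :: real
    and H L :: "'v \<Rightarrow> real \<Rightarrow> real" and Oh :: "'v \<Rightarrow> 'v \<Rightarrow> real \<Rightarrow> real"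
  assumes "graph_ok V E"
    and "\<rho> > 0" and "\<kappa> > 0" and "\<delta> \<ge> 0"
    and "hw_clocks V \<rho> H"
    and "offset_gcs_exec V E \<mu> \<kappa> \<delta> H L Oh"
    and "\<forall>v\<in>V. \<forall>w\<in>nbrs E v. \<forall>t\<ge>0. \<bar>Oh v w t - (L w t - L v t)\<bar> \<le> \<delta>"
    and "\<kappa> > 2 * \<delta>" and "\<mu> > \<rho>"
  shows "gcs_exec V E \<rho> \<mu> \<kappa> H L"
proof -
  have fin: "finite (nbrs E v)" for v using finite_nbrs[OF assms(1)] .
  have fast: "fast_trigger E \<kappa> \<delta> Oh v \<tau>"
    if "v \<in> V" "\<tau> \<ge> 0" "fast_cond E \<kappa> L v \<tau>" for v \<tau>
    using fast_cond_imp_fast_trigger[OF fin] assms(7) that by blast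
  have slow: "\<not> fast_trigger E \<kappa> \<delta> Oh v \<tau>"
    if "v \<in> V" "\<tau> \<ge> 0" "slow_cond E \<kappa> L v \<tau>" for v \<tau>
    using slow_cond_imp_not_fast_trigger[OF fin _ assms(8)] assms(7) that by blast
  show ?thesis
    using assms(6,9) fast slow unfolding gcs_exec_def offset_gcs_exec_def
    by (meson atLeastAtMost_iff order_trans)
qed

end
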